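(* Let $(\mathcal{X},d)$ be a finite metric space with at least two points, $\mu\in\mathcal{M}_+(\mathcal{X})$ with $\mu(x)\in\{0,1\}$ for all $x$, $s_x\in(0,1]$ for $x\in\mathcal{X}$, and let $\hat\mu_{s_\mathcal{X}}$ be the Bernoulli-model estimator. Then for every $p\ge1$, $C>0$, $q>1$, $L\in\mathbb{N}$, $$\mathbb{E}\big[\mathrm{KR}_{p,C}(\hat\mu_{s_\mathcal{X}},\mu)\big]\le\mathcal{E}_{p,\mathcal{X}}(C,q,L)^{1/p}\cdot\begin{cases}\big(2\sum_{x\in\mathcal{X}}(1-s_x)\big)^{1/p}, & \text{if } C\le\max\{2h_{q,L}(L),\min_{x\ne x'}d(x,x')\},\\[0.5ex]\big(\sum_{x\in\mathcal{X}}\frac{1-s_x}{s_x}\big)^{1/(2p)}, & \text{otherwise.}\end{cases}$$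
   Context: $\mathrm{KR}_{p,C}(\mu,\nu)=\big(\min_{\pi\in\Pi_\le(\mu,\nu)}\sum_{x,x'}d^p(x,x')\pi(x,x')+C^p(\frac{\mathbb{M}(\mu)+\mathbb{M}(\nu)}2-\mathbb{M}(\pi))\big)^{1/p}$, $\Pi_\le(\mu,\nu)$ the non-negative $\pi$ with row sums $\le\mu$ and column sums $\le\nu$, $\mathbb{M}$ total mass. Bernoulli model: independent $B_x\sim\mathrm{Ber}(s_x)$, $\hat\mu_{s_\mathcal{X}}=\sum_{x\in\mathrm{supp}(\mu)}\frac{B_x}{s_x}\delta_x$. $h_{q,L}(k)=\frac{q^{1-k}-q^{-L}}{q-1}\mathrm{diam}(\mathcal{X})$; $Q_j$ ($j=0..L$) a minimal-cardinality $q^{-j}\mathrm{diam}(\mathcal{X})$-cover of $\mathcal{X}$ by points of $\mathcal{X}$; $A_{q,p,L,\mathcal{X}}(l)=\mathrm{diam}(\mathcal{X})^p2^{p-1}(q^{-Lp}|\mathcal{X}|^{1/2}+(\frac q{q-1})^p\sum_{j=l}^Lq^{p-jp}|Q_j|^{1/2})$. The constant (same as in the Poisson model): $\mathcal{E}_{p,\mathcal{X}}(C,q,L)=\frac{C^p}2$ if $C\le\max\{2h_{q,L}(L),\min_{x\ne x'}d(x,x')\}$; otherwise $(\frac{C^p}2-2^{p-1}h_{q,L}(0)^p)+A_{q,p,L,\mathcal{X}}(1)$ if $C\ge2h_{q,L}(0)$; otherwise $A_{q,p,L,\mathcal{X}}(l)$ for the $l\in\{1,\dots,L\}$ with $2h_{q,L}(l)\le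 C<2h_{q,L}(l-1)$. *)

theory Defs
  imports "HOL-Probability.Probability"
begin

definition finite_metric_space :: "'a set \<Rightarrow> ('a \<Rightarrow> 'a \<Rightarrow> real) \<Rightarrow> bool" where
  "finite_metric_space X d \<longleftrightarrow> finite X \<and>
     (\<forall>x\<in>X. \<forall>y\<in>X. d x y = 0 \<longleftrightarrow> x = y) \<and>
     (\<forall>x\<in>X. \<forall>y\<in>X. d x y = d y x) \<and>
     (\<forall>x\<in>X. \<forall>y\<in>X. \<forall>z\<in>X. d x z \<le> d x y + d y z)"

definition mass :: "'a set \<Rightarrow> ('a \<Rightarrow> real) \<Rightarrow> real" where
  "mass X \<mu> = (\<Sum>x\<in>X. \<mu> x)"

definition subcouplings :: "'a set \<Rightarrow> ('a \<Rightarrow> real) \<Rightarrow> ('a \<Rightarrow> real) \<Rightarrow> ('a \<Rightarrow> 'a \<Rightarrow> real) set" where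
  "subcouplings X \<mu> \<nu> = {\<pi>. (\<forall>x y. \<pi> x y \<ge> 0) \<and> (\<forall>x y. (x \<notin> X \<or> y \<notin> X) \<longrightarrow> \<pi> x y = 0) \<and>
      (\<forall>x\<in>X. (\<Sum>y\<in>X. \<pi> x y) \<le> \<mu> x) \<and> (\<forall>y\<in>X. (\<Sum>x\<in>X. \<pi> x y) \<le> \<nu> y)}"

definition KR :: "'a set \<Rightarrow> ('a \<Rightarrow> 'a \<Rightarrow> real) \<Rightarrow> real \<Rightarrow> real \<Rightarrow> ('a \<Rightarrow> real) \<Rightarrow> ('a \<Rightarrow> real) \<Rightarrow> real" where
  "KR X d p C \<mu> \<nu> =
     (Inf ((\<lambda>\<pi>. (\<Sum>x\<in>X. \<Sum>x'\<in>X. d x x' powr p * \<pi> x x')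
               + C powr p * ((mass X \<mu> + mass X \<nu>) / 2 - (\<Sum>x\<in>X. \<Sum>x'\<in>X. \<pi> x x')))
          ` subcouplings X \<mu> \<nu>)) powr (1 / p)"

definition supp :: "'a set \<Rightarrow> ('a \<Rightarrow> real) \<Rightarrow> 'a set" where
  "supp X \<mu> = {x\<in>X. \<mu> x \<noteq> 0}"

definition bernoulli_family :: "'a set \<Rightarrow> ('a \<Rightarrow> real) \<Rightarrow> ('a \<Rightarrow> real) \<Rightarrow> ('a \<Rightarrow> bool) pmf" where
  "bernoulli_family X \<mu> s = Pi_pmf (supp X \<mu>) False (\<lambda>x. bernoulli_pmf (s x))"

text \<open>The estimator sum_{x in supp mu} B_x / s_x delta_x, as a weight function.\<close>
definition bernoulli_estimator :: "'a set \<Rightarrow> ('a \<Rightarrow> real) \<Rightarrow> ('a \<Rightarrow> real) \<Rightarrow> ('a \<Rightarrow> bool) \<Rightarrow> 'a \<Rightarrow> real" where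
  "bernoulli_estimator X \<mu> s B x = (if x \<in> supp X \<mu> \<and> B x then 1 / s x else 0)"

definition diam :: "'a set \<Rightarrow> ('a \<Rightarrow> 'a \<Rightarrow> real) \<Rightarrow> real" where
  "diam X d = Max {d x y | x y. x \<in> X \<and> y \<in> X}"

definition min_sep :: "'a set \<Rightarrow> ('a \<Rightarrow> 'a \<Rightarrow> real) \<Rightarrow> real" where
  "min_sep X d = Min {d x y | x y. x \<in> X \<and> y \<in> X \<and> x \<noteq> y}"

definition h_fun :: "'a set \<Rightarrow> ('a \<Rightarrow> 'a \<Rightarrow> real) \<Rightarrow> real \<Rightarrow> nat \<Rightarrow> nat \<Rightarrow> real" where
  "h_fun X d q L k = (q powr (1 - real k) - q powr (- real L)) / (q - 1) * diam X d"

definition cover_number :: "'a set \<Rightarrow> ('a \<Rightarrow> 'a \<Rightarrow> real) \<Rightarrow> real \<Rightarrow> nat" where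
  "cover_number X d r = Min {card Q | Q. Q \<subseteq> X \<and> (\<forall>x\<in>X. \<exists>y\<in>Q. d x y \<le> r)}"

definition A_fun :: "'a set \<Rightarrow> ('a \<Rightarrow> 'a \<Rightarrow> real) \<Rightarrow> real \<Rightarrow> real \<Rightarrow> nat \<Rightarrow> nat \<Rightarrow> real" where
  "A_fun X d q p L l = diam X d powr p * 2 powr (p - 1) *
     (q powr (- real L * p) * sqrt (real (card X)) +
      (q / (q - 1)) powr p *
        (\<Sum>j\<in>{l..L}. q powr (p - real j * p) *
            sqrt (real (cover_number X d (q powr (- real j) * diam X d)))))"

definition E_const :: "'a set \<Rightarrow> ('a \<Rightarrow> 'a \<Rightarrow> real) \<Rightarrow> real \<Rightarrow> real \<Rightarrow> real \<Rightarrow> nat \<Rightarrow> real" where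
  "E_const X d p C q L =
     (if C \<le> max (2 * h_fun X d q L L) (min_sep X d) then C powr p / 2
      else if C \<ge> 2 * h_fun X d q L 0 then
        (C powr p / 2 - 2 powr (p - 1) * h_fun X d q L 0 powr p) + A_fun X d q p L 1
      else A_fun X d q p L
             (THE l. l \<in> {1..L} \<and> 2 * h_fun X d q L l \<le> C \<and> C < 2 * h_fun X d q L (l - 1)))"

end

theory Submission
  imports Defs
begin

(*
  Couple the estimator with \<mu> along nested nets of radii q^-k diam(X): at level k, mass that
  cannot be matched inside the cells of the finer level is matched inside the cells of level k,
  over distances at most 2 h(k), and whatever is still unmatched at the coarsest level used is
  deleted at price C^p/2.  The unmatched mass at a level is the discrepancy of the estimation
  error over its cells; by Cauchy-Schwarz and the variance of the Bernoulli estimator its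
  expectation is at most sqrt(#cells) * sqrt(sum (1 - s x) / s x), and concavity of t^(1/p)
  moves the expectation inside the root.  For small C it is cheaper to delete all mismatch,
  whose expected size is 2 sum (1 - s x).
*)

section \<open>Partial transport plans built along a hierarchy of partitions\<close>

definition cell_sum :: "'a set \<Rightarrow> ('a \<Rightarrow> 'b) \<Rightarrow> ('a \<Rightarrow> real) \<Rightarrow> 'b \<Rightarrow> real" where
  "cell_sum X g f c = (\<Sum>x\<in>{x\<in>X. g x = c}. f x)"

definition discrepancy :: "'a set \<Rightarrow> ('a \<Rightarrow> 'b) \<Rightarrow> ('a \<Rightarrow> real) \<Rightarrow> real" where
  "discrepancy X g f = (\<Sum>c\<in>g ` X. \<bar>cell_sum X g f c\<bar>)"

definition plan_mass :: "'a set \<Rightarrow> ('a \<Rightarrow> 'a \<Rightarrow> real) \<Rightarrow> real" where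
  "plan_mass X \<pi> = (\<Sum>x\<in>X. \<Sum>y\<in>X. \<pi> x y)"

definition plan_cost :: "'a set \<Rightarrow> ('a \<Rightarrow> 'a \<Rightarrow> real) \<Rightarrow> real \<Rightarrow> ('a \<Rightarrow> 'a \<Rightarrow> real) \<Rightarrow> real" where
  "plan_cost X d p \<pi> = (\<Sum>x\<in>X. \<Sum>y\<in>X. d x y powr p * \<pi> x y)"

definition within_cells :: "'a set \<Rightarrow> ('a \<Rightarrow> 'b) \<Rightarrow> ('a \<Rightarrow> 'a \<Rightarrow> real) \<Rightarrow> bool" where
  "within_cells X g \<pi> \<longleftrightarrow> (\<forall>x\<in>X. \<forall>y\<in>X. \<pi> x y \<noteq> 0 \<longrightarrow> g x = g y)"

definition row_defect :: "'a set \<Rightarrow> ('a \<Rightarrow> 'a \<Rightarrow> real) \<Rightarrow> ('a \<Rightarrow> real) \<Rightarrow> 'a \<Rightarrow> real" where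
  "row_defect X \<pi> a x = a x - (\<Sum>y\<in>X. \<pi> x y)"

definition col_defect :: "'a set \<Rightarrow> ('a \<Rightarrow> 'a \<Rightarrow> real) \<Rightarrow> ('a \<Rightarrow> real) \<Rightarrow> 'a \<Rightarrow> real" where
  "col_defect X \<pi> b y = b y - (\<Sum>x\<in>X. \<pi> x y)"

text \<open>Inside every cell of \<open>g\<close>, the unmatched mass of \<open>a\<close> is sent to the unmatched mass of \<open>b\<close>
  by the product plan, scaled by the larger of the two cell totals: this respects both marginals
  and moves the smaller of the two totals.\<close>
definition refine_plan ::
    "'a set \<Rightarrow> ('a \<Rightarrow> 'b) \<Rightarrow> ('a \<Rightarrow> real) \<Rightarrow> ('a \<Rightarrow> real) \<Rightarrow> ('a \<Rightarrow> 'a \<Rightarrow> real) \<Rightarrow> 'a \<Rightarrow> 'a \<Rightarrow> real" where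
  "refine_plan X g a b \<pi> x y = \<pi> x y +
     (if x \<in> X \<and> y \<in> X \<and> g x = g y
      then row_defect X \<pi> a x * col_defect X \<pi> b y /
           max (cell_sum X g (row_defect X \<pi> a) (g x)) (cell_sum X g (col_defect X \<pi> b) (g x))
      else 0)"

lemma mult_div_max_le:
  fixes u v w :: real
  assumes "u \<ge> 0" "v \<ge> 0" "w \<ge> 0"
  shows "u * v / max w v \<le> u"
proof (cases "max w v = 0")
  case False
  then have "max w v > 0" using assms by (cases "w \<le> v") (auto simp: max_def)
  then show ?thesis using assms by (simp add: divide_le_eq mult_left_mono)
qed (use assms in simp)

lemma mult_div_max_eq_min:
  fixes u v :: real
  assumes "u \<ge> 0" "v \<ge> 0"
  shows "u * v / max u v = min u v"
  using assms by (cases "u \<le> v") (auto simp: max_def min_def field_simps)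

context
  fixes X :: "'a set" and g :: "'a \<Rightarrow> 'b" and a b :: "'a \<Rightarrow> real" and \<pi> :: "'a \<Rightarrow> 'a \<Rightarrow> real"
  assumes fin: "finite X" and sub: "\<pi> \<in> subcouplings X a b"
begin

private abbreviation "\<rho> \<equiv> row_defect X \<pi> a"
private abbreviation "\<sigma> \<equiv> col_defect X \<pi> b"
private abbreviation "R\<rho> \<equiv> cell_sum X g \<rho>"
private abbreviation "R\<sigma> \<equiv> cell_sum X g \<sigma>"

private lemma defects_nonneg: "x \<in> X \<Longrightarrow> \<rho> x \<ge> 0" "x \<in> X \<Longrightarrow> \<sigma> x \<ge> 0"
  using sub by (auto simp: subcouplings_def row_defect_def col_defect_def)

private lemma cell_defects_nonneg: "R\<rho> c \<ge> 0" "R\<sigma> c \<ge> 0"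
  unfolding cell_sum_def using defects_nonneg by (auto intro: sum_nonneg)

private lemma refine_increment_nonneg: "refine_plan X g a b \<pi> x y - \<pi> x y \<ge> 0"
  using defects_nonneg cell_defects_nonneg
  by (auto simp: refine_plan_def le_max_iff_disj intro!: divide_nonneg_nonneg)

lemma refine_plan_row_sum:
  assumes "x \<in> X"
  shows "(\<Sum>y\<in>X. refine_plan X g a b \<pi> x y)
           = (\<Sum>y\<in>X. \<pi> x y) + \<rho> x * R\<sigma> (g x) / max (R\<rho> (g x)) (R\<sigma> (g x))"
proof -
  have "(\<Sum>y\<in>X. refine_plan X g a b \<pi> x y - \<pi> x y)
          = (\<Sum>y\<in>{y\<in>X. g y = g x}. \<rho> x * \<sigma> y / max (R\<rho> (g x)) (R\<sigma> (g x)))"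
    using assms by (subst sum.inter_filter[OF fin]) (auto simp: refine_plan_def intro!: sum.cong)
  then show ?thesis
    by (simp add: sum_subtractf cell_sum_def sum_distrib_left sum_divide_distrib)
qed

lemma refine_plan_col_sum:
  assumes "y \<in> X"
  shows "(\<Sum>x\<in>X. refine_plan X g a b \<pi> x y)
           = (\<Sum>x\<in>X. \<pi> x y) + \<sigma> y * R\<rho> (g y) / max (R\<rho> (g y)) (R\<sigma> (g y))"
proof -
  have "(\<Sum>x\<in>X. refine_plan X g a b \<pi> x y - \<pi> x y)
          = (\<Sum>x\<in>{x\<in>X. g x = g y}. \<sigma> y * \<rho> x / max (R\<rho> (g y)) (R\<sigma> (g y)))"
    using assms by (subst sum.inter_filter[OF fin]) (auto simp: refine_plan_def mult.commute intro!: sum.cong)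
  then show ?thesis
    by (simp add: sum_subtractf cell_sum_def sum_distrib_left sum_divide_distrib)
qed

lemma refine_plan_subcoupling: "refine_plan X g a b \<pi> \<in> subcouplings X a b"
proof -
  have "(\<Sum>y\<in>X. refine_plan X g a b \<pi> x y) \<le> a x" if "x \<in> X" for x
    using mult_div_max_le[of "\<rho> x" "R\<sigma> (g x)" "R\<rho> (g x)"] defects_nonneg cell_defects_nonneg that
    by (simp add: refine_plan_row_sum row_defect_def)
  moreover have "(\<Sum>x\<in>X. refine_plan X g a b \<pi> x y) \<le> b y" if "y \<in> X" for y
    using mult_div_max_le[of "\<sigma> y" "R\<rho> (g y)" "R\<sigma> (g y)"] defects_nonneg cell_defects_nonneg that
    by (simp add: refine_plan_col_sum col_defect_def max.commute)
  moreover have "refine_plan X g a b \<pi> x y \<ge> 0" for x y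
  proof -
    have "\<pi> x y \<ge> 0" using sub by (simp add: subcouplings_def)
    then show ?thesis using refine_increment_nonneg[of x y] by linarith
  qed
  ultimately show ?thesis
    using sub by (auto simp: subcouplings_def refine_plan_def)
qed

lemma refine_plan_within_cells:
  "within_cells X g \<pi> \<Longrightarrow> within_cells X g (refine_plan X g a b \<pi>)"
  by (auto simp: within_cells_def refine_plan_def)

lemma refine_plan_mass_increment:
  "plan_mass X (refine_plan X g a b \<pi>) = plan_mass X \<pi> + (\<Sum>c\<in>g ` X. min (R\<rho> c) (R\<sigma> c))"
proof -
  have "plan_mass X (refine_plan X g a b \<pi>)
          = plan_mass X \<pi> + (\<Sum>x\<in>X. \<rho> x * R\<sigma> (g x) / max (R\<rho> (g x)) (R\<sigma> (g x)))"
    by (simp add: plan_mass_def refine_plan_row_sum sum.distrib)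
  also have "(\<Sum>x\<in>X. \<rho> x * R\<sigma> (g x) / max (R\<rho> (g x)) (R\<sigma> (g x)))
               = (\<Sum>c\<in>g ` X. R\<rho> c * R\<sigma> c / max (R\<rho> c) (R\<sigma> c))"
    by (subst sum.image_gen[OF fin, of _ g])
      (simp add: cell_sum_def sum_divide_distrib sum_distrib_right)
  also have "\<dots> = (\<Sum>c\<in>g ` X. min (R\<rho> c) (R\<sigma> c))"
    using cell_defects_nonneg by (intro sum.cong refl mult_div_max_eq_min)
  finally show ?thesis .
qed

lemma cell_defect_difference:
  assumes "within_cells X g \<pi>"
  shows "R\<rho> c - R\<sigma> c = cell_sum X g (\<lambda>x. a x - b x) c"
proof -
  let ?cell = "{x\<in>X. g x = c}"
  have "(\<Sum>y\<in>X. \<pi> x y) = (\<Sum>y\<in>?cell. \<pi> x y)" "(\<Sum>y\<in>X. \<pi> y x) = (\<Sum>y\<in>?cell. \<pi> y x)"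
    if "x \<in> ?cell" for x
    using assms that fin by (auto simp: within_cells_def intro!: sum.mono_neutral_right)
  then have "R\<rho> c - R\<sigma> c = cell_sum X g (\<lambda>x. a x - b x) c
               - ((\<Sum>x\<in>?cell. \<Sum>y\<in>?cell. \<pi> x y) - (\<Sum>y\<in>?cell. \<Sum>x\<in>?cell. \<pi> x y))"
    by (simp add: cell_sum_def row_defect_def col_defect_def sum_subtractf)
  then show ?thesis
    using sum.swap[of \<pi> ?cell ?cell] by simp
qed

lemma refine_plan_mass:
  assumes "within_cells X g \<pi>"
  shows "2 * plan_mass X (refine_plan X g a b \<pi>)
           = mass X a + mass X b - discrepancy X g (\<lambda>x. a x - b x)"
proof -
  have "(\<Sum>c\<in>g ` X. R\<rho> c + R\<sigma> c) = (\<Sum>x\<in>X. \<rho> x) + (\<Sum>x\<in>X. \<sigma> x)"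
    by (simp add: cell_sum_def sum.distrib sum.image_gen[OF fin, of _ g, symmetric])
  also have "\<dots> = mass X a + mass X b - 2 * plan_mass X \<pi>"
    using sum.swap[of \<pi> X X]
    by (simp add: row_defect_def col_defect_def mass_def plan_mass_def sum_subtractf)
  finally have totals: "(\<Sum>c\<in>g ` X. R\<rho> c + R\<sigma> c) = \<dots>" .
  have "2 * (\<Sum>c\<in>g ` X. min (R\<rho> c) (R\<sigma> c))
          = (\<Sum>c\<in>g ` X. R\<rho> c + R\<sigma> c - \<bar>R\<rho> c - R\<sigma> c\<bar>)"
    unfolding sum_distrib_left by (intro sum.cong refl) (simp add: min_def)
  also have "\<dots> = (\<Sum>c\<in>g ` X. R\<rho> c + R\<sigma> c) - (\<Sum>c\<in>g ` X. \<bar>R\<rho> c - R\<sigma> c\<bar>)"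
    by (rule sum_subtractf)
  finally have "2 * (\<Sum>c\<in>g ` X. min (R\<rho> c) (R\<sigma> c)) = \<dots>" .
  then show ?thesis
    using totals assms
    by (simp add: refine_plan_mass_increment discrepancy_def cell_defect_difference)
qed

lemma refine_plan_cost:
  assumes diam: "\<And>x y. x \<in> X \<Longrightarrow> y \<in> X \<Longrightarrow> g x = g y \<Longrightarrow> d x y \<le> \<delta>"
    and d_nonneg: "\<And>x y. x \<in> X \<Longrightarrow> y \<in> X \<Longrightarrow> 0 \<le> d x y" and "p > 0"
  shows "plan_cost X d p (refine_plan X g a b \<pi>)
           \<le> plan_cost X d p \<pi> + \<delta> powr p * (plan_mass X (refine_plan X g a b \<pi>) - plan_mass X \<pi>)"
proof -
  let ?e = "\<lambda>x y. refine_plan X g a b \<pi> x y - \<pi> x y"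
  have "d x y powr p * ?e x y \<le> \<delta> powr p * ?e x y" if "x \<in> X" "y \<in> X" for x y
  proof (cases "g x = g y")
    case True
    then have "d x y powr p \<le> \<delta> powr p"
      using diam d_nonneg that \<open>p > 0\<close> by (intro powr_mono2) auto
    then show ?thesis using refine_increment_nonneg by (intro mult_right_mono) auto
  qed (simp add: refine_plan_def)
  then have "(\<Sum>x\<in>X. \<Sum>y\<in>X. d x y powr p * ?e x y) \<le> (\<Sum>x\<in>X. \<Sum>y\<in>X. \<delta> powr p * ?e x y)"
    by (intro sum_mono) auto
  then show ?thesis
    by (simp add: plan_cost_def plan_mass_def algebra_simps sum_subtractf sum_distrib_left)
qed

end

definition partial_transport_cost ::
    "'a set \<Rightarrow> ('a \<Rightarrow> 'a \<Rightarrow> real) \<Rightarrow> real \<Rightarrow> real \<Rightarrow> ('a \<Rightarrow> real) \<Rightarrow> ('a \<Rightarrow> real) \<Rightarrow> ('a \<Rightarrow> 'a \<Rightarrow> real) \<Rightarrow> real" where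
  "partial_transport_cost X d p C a b \<pi> =
     plan_cost X d p \<pi> + C powr p * ((mass X a + mass X b) / 2 - plan_mass X \<pi>)"

lemma partial_transport_cost_nonneg:
  assumes "\<pi> \<in> subcouplings X a b" and "\<And>x y. x \<in> X \<Longrightarrow> y \<in> X \<Longrightarrow> 0 \<le> d x y"
  shows "partial_transport_cost X d p C a b \<pi> \<ge> 0"
proof -
  have "plan_mass X \<pi> \<le> mass X a"
    using assms(1) unfolding plan_mass_def mass_def subcouplings_def by (intro sum_mono) auto
  moreover have "plan_mass X \<pi> \<le> mass X b"
    using assms(1) sum.swap[of \<pi> X X]
    unfolding plan_mass_def mass_def subcouplings_def by (auto intro: sum_mono)
  moreover have "plan_cost X d p \<pi> \<ge> 0"
    using assms unfolding plan_cost_def subcouplings_def by (auto intro!: sum_nonneg)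
  ultimately show ?thesis
    unfolding partial_transport_cost_def by (auto intro!: add_nonneg_nonneg)
qed

lemma KR_le_partial_transport_cost:
  assumes "\<pi> \<in> subcouplings X a b" and "\<And>x y. x \<in> X \<Longrightarrow> y \<in> X \<Longrightarrow> 0 \<le> d x y"
    and "p > 0" and "partial_transport_cost X d p C a b \<pi> \<le> c"
  shows "KR X d p C a b \<le> c powr (1 / p)"
proof -
  let ?costs = "partial_transport_cost X d p C a b ` subcouplings X a b"
  have nonneg: "\<And>\<sigma>. \<sigma> \<in> subcouplings X a b \<Longrightarrow> partial_transport_cost X d p C a b \<sigma> \<ge> 0"
    using partial_transport_cost_nonneg assms(2) by blast
  have "KR X d p C a b = Inf ?costs powr (1 / p)"
    by (simp add: KR_def partial_transport_cost_def plan_cost_def plan_mass_def)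
  moreover have "Inf ?costs \<le> c"
    using assms(1,4) nonneg by (intro cInf_lower2 bdd_belowI[of _ 0]) auto
  moreover have "Inf ?costs \<ge> 0"
    using assms(1) nonneg by (intro cInf_greatest) auto
  ultimately show ?thesis
    using \<open>p > 0\<close> by (simp add: powr_mono2)
qed

context
  fixes X :: "'a set" and a b :: "'a \<Rightarrow> real" and d :: "'a \<Rightarrow> 'a \<Rightarrow> real" and p :: real
    and g :: "nat \<Rightarrow> 'a \<Rightarrow> 'b" and L :: nat and H :: "nat \<Rightarrow> real"
  assumes fin: "finite X"
    and nonneg: "\<And>x. x \<in> X \<Longrightarrow> a x \<ge> 0" "\<And>x. x \<in> X \<Longrightarrow> b x \<ge> 0"
    and d: "\<And>x. x \<in> X \<Longrightarrow> d x x = 0" "\<And>x y. x \<in> X \<Longrightarrow> y \<in> X \<Longrightarrow> 0 \<le> d x y"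
    and p: "p > 0"
    and finest: "inj_on (g (Suc L)) X"
    and nested: "\<And>k x y. k \<le> L \<Longrightarrow> g (Suc k) x = g (Suc k) y \<Longrightarrow> g k x = g k y"
    and cell_diam: "\<And>k x y. k \<le> L \<Longrightarrow> x \<in> X \<Longrightarrow> y \<in> X \<Longrightarrow> g k x = g k y \<Longrightarrow> d x y \<le> 2 * H k"
    and H_nonneg: "\<And>k. k \<le> L \<Longrightarrow> H k \<ge> 0"
begin

text \<open>Plans are refined from the finest partition \<open>g (Suc L)\<close>, whose cells are single points, down
  to level \<open>k\<close>; each refinement at level \<open>j\<close> moves the mass
  \<open>(discrepancy (g (Suc j)) - discrepancy (g j)) / 2\<close> over distances at most \<open>2 * H j\<close>.\<close>
lemma hierarchical_plan:
  assumes "k \<le> Suc L"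
  shows "\<exists>\<pi>\<in>subcouplings X a b. within_cells X (g k) \<pi> \<and>
           2 * plan_mass X \<pi> = mass X a + mass X b - discrepancy X (g k) (\<lambda>x. a x - b x) \<and>
           plan_cost X d p \<pi> \<le> (\<Sum>j\<in>{k..L}. 2 powr (p - 1) * H j powr p *
              (discrepancy X (g (Suc j)) (\<lambda>x. a x - b x) - discrepancy X (g j) (\<lambda>x. a x - b x)))"
  using assms
proof (induction rule: inc_induct)
  case base
  let ?\<pi> = "refine_plan X (g (Suc L)) a b (\<lambda>_ _. 0)"
  have zero: "(\<lambda>_ _. 0) \<in> subcouplings X a b" "within_cells X (g (Suc L)) (\<lambda>_ _. 0)"
    using nonneg by (auto simp: subcouplings_def within_cells_def)
  have "d x y \<le> 0" if "x \<in> X" "y \<in> X" "g (Suc L) x = g (Suc L) y" for x y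
    using inj_onD[OF finest that(3,1,2)] d(1) that by simp
  then have "plan_cost X d p ?\<pi> \<le> plan_cost X d p (\<lambda>_ _. 0) + 0 powr p * (plan_mass X ?\<pi> - plan_mass X (\<lambda>_ _. 0))"
    using d(2) p by (intro refine_plan_cost[OF fin zero(1)])
  then have "plan_cost X d p ?\<pi> \<le> 0"
    by (simp add: plan_cost_def)
  then show ?case
    using refine_plan_subcoupling[OF fin zero(1)] refine_plan_within_cells[OF fin zero]
      refine_plan_mass[OF fin zero] by (intro bexI[of _ ?\<pi>]) auto
next
  case (step j)
  let ?T = "\<lambda>j. discrepancy X (g j) (\<lambda>x. a x - b x)"
  obtain \<pi> where \<pi>: "\<pi> \<in> subcouplings X a b" "within_cells X (g (Suc j)) \<pi>"
    and mass: "2 * plan_mass X \<pi> = mass X a + mass X b - ?T (Suc j)"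
    and cost: "plan_cost X d p \<pi> \<le> (\<Sum>i\<in>{Suc j..L}. 2 powr (p - 1) * H i powr p * (?T (Suc i) - ?T i))"
    using step.IH by (elim bexE conjE) (rule that)
  have "j \<le> L" using step.hyps by simp
  then have cells: "within_cells X (g j) \<pi>"
    using \<pi>(2) nested unfolding within_cells_def by blast
  let ?\<pi> = "refine_plan X (g j) a b \<pi>"
  let ?w = "\<lambda>i. 2 powr (p - 1) * H i powr p * (?T (Suc i) - ?T i)"
  have mass': "2 * plan_mass X ?\<pi> = mass X a + mass X b - ?T j"
    by (rule refine_plan_mass[OF fin \<pi>(1) cells])
  have "d x y \<le> 2 * H j" if "x \<in> X" "y \<in> X" "g j x = g j y" for x y
    using cell_diam[OF \<open>j \<le> L\<close> that] .
  then have "plan_cost X d p ?\<pi> \<le> plan_cost X d p \<pi> + (2 * H j) powr p * (plan_mass X ?\<pi> - plan_mass X \<pi>)"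
    using d(2) p by (rule refine_plan_cost[OF fin \<pi>(1)])
  also have "plan_mass X ?\<pi> - plan_mass X \<pi> = (?T (Suc j) - ?T j) / 2"
    using mass mass' by (simp add: field_simps)
  also have "(2 * H j) powr p * ((?T (Suc j) - ?T j) / 2) = ?w j"
    using H_nonneg[OF \<open>j \<le> L\<close>] by (simp add: powr_mult powr_diff)
  finally have "plan_cost X d p ?\<pi> \<le> (\<Sum>i\<in>{j..L}. ?w i)"
    using cost sum.atLeast_Suc_atMost[OF \<open>j \<le> L\<close>, of ?w] by linarith
  then show ?case
    using refine_plan_subcoupling[OF fin \<pi>(1)] refine_plan_within_cells[OF fin \<pi>(1) cells] mass'
    by blast
qed

lemma KR_le_hierarchical:
  assumes "l \<le> Suc L"
    and "(\<Sum>j\<in>{l..L}. 2 powr (p - 1) * H j powr p *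
            (discrepancy X (g (Suc j)) (\<lambda>x. a x - b x) - discrepancy X (g j) (\<lambda>x. a x - b x)))
          + C powr p / 2 * discrepancy X (g l) (\<lambda>x. a x - b x) \<le> c"
  shows "KR X d p C a b \<le> c powr (1 / p)"
proof -
  obtain \<pi> where \<pi>: "\<pi> \<in> subcouplings X a b"
    and mass: "2 * plan_mass X \<pi> = mass X a + mass X b - discrepancy X (g l) (\<lambda>x. a x - b x)"
    and cost: "plan_cost X d p \<pi> \<le> (\<Sum>j\<in>{l..L}. 2 powr (p - 1) * H j powr p *
            (discrepancy X (g (Suc j)) (\<lambda>x. a x - b x) - discrepancy X (g j) (\<lambda>x. a x - b x)))"
    using hierarchical_plan[OF assms(1)] by blast
  have unmatched: "(mass X a + mass X b) / 2 - plan_mass X \<pi> = discrepancy X (g l) (\<lambda>x. a x - b x) / 2"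
    using mass by (simp add: field_simps)
  have "partial_transport_cost X d p C a b \<pi> \<le> c"
    using cost assms(2) unfolding partial_transport_cost_def unmatched by simp
  with \<pi> d(2) p show ?thesis
    by (rule KR_le_partial_transport_cost)
qed

end

section \<open>Nested nets\<close>

lemma finite_metric_spaceD:
  assumes "finite_metric_space X d"
  shows "finite X"
    and "x \<in> X \<Longrightarrow> d x x = 0"
    and "x \<in> X \<Longrightarrow> y \<in> X \<Longrightarrow> d x y = d y x"
    and "x \<in> X \<Longrightarrow> y \<in> X \<Longrightarrow> z \<in> X \<Longrightarrow> d x z \<le> d x y + d y z"
    and "x \<in> X \<Longrightarrow> y \<in> X \<Longrightarrow> 0 \<le> d x y"
proof -
  show "finite X" using assms by (simp add: finite_metric_space_def)
  show "x \<in> X \<Longrightarrow> d x x = 0" "x \<in> X \<Longrightarrow> y \<in> X \<Longrightarrow> d x y = d y x"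
    "x \<in> X \<Longrightarrow> y \<in> X \<Longrightarrow> z \<in> X \<Longrightarrow> d x z \<le> d x y + d y z"
    using assms by (simp_all add: finite_metric_space_def)
  assume "x \<in> X" "y \<in> X"
  then have "d x x \<le> d x y + d y x" "d x x = 0" "d y x = d x y"
    using assms unfolding finite_metric_space_def by blast+
  then show "0 \<le> d x y" by linarith
qed

lemma dist_le_diam:
  assumes "finite X" "x \<in> X" "y \<in> X"
  shows "d x y \<le> diam X d"
proof -
  have "{d x y | x y. x \<in> X \<and> y \<in> X} = (\<lambda>(x, y). d x y) ` (X \<times> X)" by auto
  then show ?thesis
    using assms unfolding diam_def by (intro Max_ge) auto
qed

lemma diam_nonneg:
  assumes "finite_metric_space X d" "X \<noteq> {}"
  shows "diam X d \<ge> 0"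
proof -
  obtain x where "x \<in> X" using assms(2) by blast
  then show ?thesis
    using dist_le_diam[of X x x d] finite_metric_spaceD[OF assms(1)] by simp
qed

lemma cover_number_le:
  assumes "finite X" "Q \<subseteq> X" "\<forall>x\<in>X. \<exists>y\<in>Q. d x y \<le> r"
  shows "cover_number X d r \<le> card Q"
proof -
  have "{card Q | Q. Q \<subseteq> X \<and> (\<forall>x\<in>X. \<exists>y\<in>Q. d x y \<le> r)} \<subseteq> card ` Pow X" by auto
  then show ?thesis
    unfolding cover_number_def using assms by (intro Min_le) (auto intro: finite_subset)
qed

lemma cover_number_attained:
  assumes "finite X" "\<And>x. x \<in> X \<Longrightarrow> d x x = 0" "r \<ge> 0"
  shows "\<exists>Q\<subseteq>X. (\<forall>x\<in>X. \<exists>y\<in>Q. d x y \<le> r) \<and> card Q = cover_number X d r"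
proof -
  let ?cards = "{card Q | Q. Q \<subseteq> X \<and> (\<forall>x\<in>X. \<exists>y\<in>Q. d x y \<le> r)}"
  have "\<forall>x\<in>X. \<exists>y\<in>X. d x y \<le> r" using assms(2,3) by force
  then have "card X \<in> ?cards" by blast
  moreover have "?cards \<subseteq> card ` Pow X" by auto
  ultimately have "Min ?cards \<in> ?cards"
    using assms(1) by (intro Min_in) (auto intro: finite_subset)
  then show ?thesis unfolding cover_number_def by auto
qed

lemma h_fun_Suc:
  assumes "q > 1"
  shows "h_fun X d q L k = q powr (- real k) * diam X d + h_fun X d q L (Suc k)"
proof -
  have "q powr (1 - real k) = q * q powr (- real k)"
    using assms by (simp add: powr_diff powr_minus divide_inverse)
  moreover have "q powr (1 - real (Suc k)) = q powr (- real k)" by simp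
  ultimately show ?thesis
    using assms unfolding h_fun_def by (simp add: field_simps)
qed

lemma h_fun_top: "h_fun X d q L (Suc L) = 0"
  by (simp add: h_fun_def)

lemma h_fun_eq_sum:
  assumes "q > 1" "k \<le> Suc L"
  shows "h_fun X d q L k = (\<Sum>j\<in>{k..L}. q powr (- real j) * diam X d)"
  using assms(2)
proof (induction rule: inc_induct)
  case (step k)
  then have "k \<le> L" by simp
  have "h_fun X d q L k = q powr (- real k) * diam X d + h_fun X d q L (Suc k)"
    by (rule h_fun_Suc[OF assms(1)])
  also have "\<dots> = (\<Sum>j\<in>{k..L}. q powr (- real j) * diam X d)"
    using step.IH sum.atLeast_Suc_atMost[OF \<open>k \<le> L\<close>, of "\<lambda>j. q powr (- real j) * diam X d"] by simp
  finally show ?case .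
qed (simp add: h_fun_top)

lemma h_fun_nonneg:
  assumes "q > 1" "diam X d \<ge> 0" "k \<le> Suc L"
  shows "h_fun X d q L k \<ge> 0"
  using assms by (simp add: h_fun_eq_sum sum_nonneg)

lemma h_fun_antimono:
  assumes "q > 1" "diam X d \<ge> 0" "k \<le> k'"
  shows "h_fun X d q L k' \<le> h_fun X d q L k"
proof -
  have "q powr (1 - real k') \<le> q powr (1 - real k)" using assms by (intro powr_mono) auto
  then show ?thesis
    unfolding h_fun_def using assms by (intro mult_right_mono divide_right_mono) auto
qed

lemma h_fun_powr_le:
  assumes q: "q > 1" and D: "diam X d \<ge> 0" and "k \<le> L" and p: "p > 0"
  shows "h_fun X d q L k powr p \<le> diam X d powr p * (q / (q - 1)) powr p * q powr (p - real (Suc k) * p)"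
proof -
  have "q powr (1 - real k) - q powr (- real L) \<le> q * q powr (- real k)"
    using q by (simp add: powr_diff powr_minus divide_inverse)
  then have "(q powr (1 - real k) - q powr (- real L)) / (q - 1) * diam X d
               \<le> q * q powr (- real k) / (q - 1) * diam X d"
    using q D by (intro mult_right_mono divide_right_mono) auto
  then have "h_fun X d q L k \<le> diam X d * (q / (q - 1)) * q powr (- real k)"
    unfolding h_fun_def by (simp add: mult_ac)
  then have "h_fun X d q L k powr p \<le> (diam X d * (q / (q - 1)) * q powr (- real k)) powr p"
    using assms h_fun_nonneg[of q X d k L] by (intro powr_mono2) auto
  also have "\<dots> = diam X d powr p * (q / (q - 1)) powr p * (q powr (- real k)) powr p"
    by (simp only: powr_mult)
  also have "(q powr (- real k)) powr p = q powr (p - real (Suc k) * p)"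
    by (simp add: powr_powr algebra_simps)
  finally show ?thesis .
qed

lemma nested_nets:
  fixes Q :: "nat \<Rightarrow> 'a set" and r :: "nat \<Rightarrow> real"
  assumes net_subset: "\<And>k. k \<le> L \<Longrightarrow> Q k \<subseteq> X"
    and net_covers: "\<And>k x. k \<le> L \<Longrightarrow> x \<in> X \<Longrightarrow> \<exists>y\<in>Q k. d x y \<le> r k"
    and dxx: "\<And>x. x \<in> X \<Longrightarrow> d x x = 0"
    and triangle: "\<And>x y z. x \<in> X \<Longrightarrow> y \<in> X \<Longrightarrow> z \<in> X \<Longrightarrow> d x z \<le> d x y + d y z"
  obtains g :: "nat \<Rightarrow> 'a \<Rightarrow> 'a"
  where "\<And>x. g (Suc L) x = x"
    and "\<And>k x y. k \<le> L \<Longrightarrow> g (Suc k) x = g (Suc k) y \<Longrightarrow> g k x = g k y"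
    and "\<And>k. k \<le> L \<Longrightarrow> g k ` X \<subseteq> Q k"
    and "\<And>k x. k \<le> Suc L \<Longrightarrow> x \<in> X \<Longrightarrow> g k x \<in> X \<and> d x (g k x) \<le> (\<Sum>j\<in>{k..L}. r j)"
proof -
  define near where "near k x = (SOME y. y \<in> Q k \<and> d x y \<le> r k)" for k x
  have near: "near k x \<in> Q k \<and> d x (near k x) \<le> r k" if "k \<le> L" "x \<in> X" for k x
    using net_covers[OF that] unfolding near_def by (metis (mono_tags, lifting) someI_ex)
  define g where "g k = foldr (\<lambda>j f. near j \<circ> f) [k..<Suc L] id" for k
  have top: "g (Suc L) x = x" for x by (simp add: g_def)
  have g_step: "g k x = near k (g (Suc k) x)" if "k \<le> L" for k x
    using that by (simp add: g_def upt_conv_Cons del: upt_Suc)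
  have bound: "g k x \<in> X \<and> d x (g k x) \<le> (\<Sum>j\<in>{k..L}. r j)" if "k \<le> Suc L" "x \<in> X" for k x
    using that(1)
  proof (induction rule: inc_induct)
    case (step k)
    let ?y = "g (Suc k) x"
    have "k \<le> L" using step.hyps by simp
    have y: "?y \<in> X" "d x ?y \<le> (\<Sum>j\<in>{Suc k..L}. r j)" using step.IH by auto
    have z: "near k ?y \<in> X" "d ?y (near k ?y) \<le> r k"
      using near[OF \<open>k \<le> L\<close> y(1)] net_subset[OF \<open>k \<le> L\<close>] by auto
    have "d x (near k ?y) \<le> d x ?y + d ?y (near k ?y)"
      using triangle[OF \<open>x \<in> X\<close> y(1) z(1)] .
    moreover have "(\<Sum>j\<in>{k..L}. r j) = r k + (\<Sum>j\<in>{Suc k..L}. r j)"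
      using \<open>k \<le> L\<close> by (rule sum.atLeast_Suc_atMost)
    ultimately show ?case
      using y z g_step[OF \<open>k \<le> L\<close>, of x] by simp
  qed (simp add: top dxx \<open>x \<in> X\<close>)
  have "g k x = g k y" if "k \<le> L" "g (Suc k) x = g (Suc k) y" for k x y
    using that by (simp add: g_step)
  moreover have "g k ` X \<subseteq> Q k" if "k \<le> L" for k
    using near[OF that] bound[of "Suc k"] g_step[OF that] that by auto
  ultimately show ?thesis
    using that top bound by blast
qed

section \<open>Moments of the Bernoulli estimator\<close>

lemma powr_le_tangent:
  fixes y K r :: real
  assumes "y \<ge> 0" "K > 0" "0 < r" "r \<le> 1"
  shows "y powr r \<le> K powr r + r * K powr (r - 1) * (y - K)"
proof -
  have K: "K * K powr (r - 1) = K powr r"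
    using assms(2) powr_mult_base[of K "r - 1"] by simp
  show ?thesis
  proof (cases "y = 0")
    case True
    have "r * K powr r \<le> K powr r" using assms by (intro mult_left_le_one_le) auto
    then show ?thesis using True K by (simp add: algebra_simps)
  next
    case False
    then have "y powr r * K powr (1 - r) \<le> r * y + (1 - r) * K"
      using Youngs_inequality_0[of r "1 - r" y K] assms by auto
    then have "y powr r * K powr (1 - r) * K powr (r - 1) \<le> (r * y + (1 - r) * K) * K powr (r - 1)"
      by (intro mult_right_mono) auto
    moreover have "K powr (1 - r) * K powr (r - 1) = 1"
      using assms(2) by (simp add: powr_add[symmetric])
    moreover have "(r * y + (1 - r) * K) * K powr (r - 1) = K powr r + r * K powr (r - 1) * (y - K)"
      using K by (simp add: algebra_simps)
    ultimately show ?thesis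
      by (simp add: mult.assoc)
  qed
qed

text \<open>Jensen's inequality for \<open>t powr r\<close>; the library's \<open>jensens_inequality\<close> needs an open
  interval, which would exclude \<open>G = 0\<close>.\<close>
lemma (in prob_space) expectation_powr_le:
  fixes G :: "'a \<Rightarrow> real"
  assumes "integrable M G" "integrable M (\<lambda>\<omega>. G \<omega> powr r)"
    and G_nonneg: "\<And>\<omega>. G \<omega> \<ge> 0" and r: "0 < r" "r \<le> 1"
  shows "expectation (\<lambda>\<omega>. G \<omega> powr r) \<le> expectation G powr r"
proof (cases "expectation G > 0")
  case True
  define K where "K = expectation G"
  have tangent: "G \<omega> powr r \<le> K powr r + r * K powr (r - 1) * (G \<omega> - K)" for \<omega>
    using powr_le_tangent[OF G_nonneg True[folded K_def] r] .
  have "expectation (\<lambda>\<omega>. G \<omega> powr r) \<le> expectation (\<lambda>\<omega>. K powr r + r * K powr (r - 1) * (G \<omega> - K))"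
    using assms by (intro integral_mono tangent) auto
  also have "\<dots> = K powr r"
    using assms(1) prob_space by (simp add: K_def)
  finally show ?thesis by (simp add: K_def)
next
  case False
  moreover have "expectation G \<ge> 0"
    using G_nonneg by (simp add: Bochner_Integration.integral_nonneg)
  ultimately have "expectation G = 0" by simp
  then have "AE \<omega> in M. G \<omega> = 0"
    using integral_nonneg_eq_0_iff_AE[OF assms(1)] G_nonneg by auto
  then have "AE \<omega> in M. G \<omega> powr r = 0" by eventually_elim simp
  then have "expectation (\<lambda>\<omega>. G \<omega> powr r) = 0"
    by (simp add: integral_eq_zero_AE)
  then show ?thesis by simp
qed

locale bernoulli_model =
  fixes X :: "'a set" and \<mu> s :: "'a \<Rightarrow> real"
  assumes finite_X: "finite X"
    and weights_01: "\<And>x. x \<in> X \<Longrightarrow> \<mu> x \<in> {0, 1}"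
    and sampling_prob: "\<And>x. x \<in> X \<Longrightarrow> 0 < s x \<and> s x \<le> 1"
begin

abbreviation "P \<equiv> bernoulli_family X \<mu> s"
abbreviation "S \<equiv> supp X \<mu>"

definition estimation_error :: "('a \<Rightarrow> bool) \<Rightarrow> 'a \<Rightarrow> real" where
  "estimation_error B x = bernoulli_estimator X \<mu> s B x - \<mu> x"

lemma supp_subset: "S \<subseteq> X"
  by (auto simp: supp_def)

lemma finite_supp: "finite S"
  using supp_subset finite_X by (rule finite_subset)

lemma finite_set_pmf: "finite (set_pmf P)"
proof -
  have "set_pmf P = PiE_dflt S False (set_pmf \<circ> (\<lambda>x. bernoulli_pmf (s x)))"
    unfolding bernoulli_family_def by (rule set_Pi_pmf[OF finite_supp])
  then show ?thesis using finite_supp by (simp add: finite_PiE_dflt)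
qed

lemma integrable_P [simp]: "integrable (measure_pmf P) (f :: _ \<Rightarrow> real)"
  by (rule integrable_measure_pmf_finite[OF finite_set_pmf])

lemma expectation_component:
  assumes "x \<in> S"
  shows "measure_pmf.expectation P (\<lambda>B. f (B x)) = f True * s x + f False * (1 - s x)"
proof -
  have "measure_pmf.expectation P (\<lambda>B. f (B x)) = measure_pmf.expectation (map_pmf (\<lambda>B. B x) P) f"
    by simp
  also have "map_pmf (\<lambda>B. B x) P = bernoulli_pmf (s x)"
    unfolding bernoulli_family_def
    using Pi_pmf_component[OF finite_supp, of x False "\<lambda>x. bernoulli_pmf (s x)"] assms by simp
  also have "measure_pmf.expectation (bernoulli_pmf (s x)) f = f True * s x + f False * (1 - s x)"
    using sampling_prob assms supp_subset by (intro integral_bernoulli_pmf) force+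
  finally show ?thesis .
qed

lemma expectation_component_pair:
  fixes f h :: "bool \<Rightarrow> real"
  assumes "x \<in> S" "y \<in> S" "x \<noteq> y" "\<And>v. f v \<ge> 0" "\<And>v. h v \<ge> 0"
  shows "measure_pmf.expectation P (\<lambda>B. f (B x) * h (B y))
           = measure_pmf.expectation P (\<lambda>B. f (B x)) * measure_pmf.expectation P (\<lambda>B. h (B y))"
proof -
  define F where "F z v = (if z = x then f v else if z = y then h v else 1)" for z v
  have prod_split: "(\<Prod>z\<in>S. \<phi> z) = \<phi> x * \<phi> y * (\<Prod>z\<in>S - {x} - {y}. \<phi> z)" for \<phi> :: "'a \<Rightarrow> real"
  proof -
    have "(\<Prod>z\<in>S. \<phi> z) = \<phi> x * (\<Prod>z\<in>S - {x}. \<phi> z)"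
      using assms finite_supp by (simp add: prod.remove)
    also have "(\<Prod>z\<in>S - {x}. \<phi> z) = \<phi> y * (\<Prod>z\<in>S - {x} - {y}. \<phi> z)"
      using assms finite_supp by (intro prod.remove) auto
    finally show ?thesis by (simp add: mult.assoc)
  qed
  have "measure_pmf.expectation P (\<lambda>B. f (B x) * h (B y)) = measure_pmf.expectation P (\<lambda>B. \<Prod>z\<in>S. F z (B z))"
    using assms(3) by (simp add: prod_split F_def)
  also have "\<dots> = (\<Prod>z\<in>S. measure_pmf.expectation (bernoulli_pmf (s z)) (F z))"
    unfolding bernoulli_family_def
    by (rule expectation_prod_Pi_pmf[OF finite_supp]) (auto simp: F_def assms integrable_measure_pmf_finite)
  also have "\<dots> = (\<Prod>z\<in>S. measure_pmf.expectation P (\<lambda>B. F z (B z)))"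
    using sampling_prob supp_subset
    by (intro prod.cong refl) (force simp: expectation_component integral_bernoulli_pmf)
  also have "\<dots> = measure_pmf.expectation P (\<lambda>B. f (B x)) * measure_pmf.expectation P (\<lambda>B. h (B y))"
    using assms(3) by (simp add: prod_split F_def)
  finally show ?thesis .
qed

lemma estimation_error_supp:
  "x \<in> S \<Longrightarrow> estimation_error B x = (if B x then 1 / s x else 0) - 1"
  using weights_01 supp_subset
  by (auto simp: estimation_error_def bernoulli_estimator_def supp_def)

lemma estimation_error_outside_supp:
  "x \<in> X \<Longrightarrow> x \<notin> S \<Longrightarrow> estimation_error B x = 0"
  by (simp add: estimation_error_def bernoulli_estimator_def supp_def)

lemma expectation_inverse_weight:
  "x \<in> S \<Longrightarrow> measure_pmf.expectation P (\<lambda>B. if B x then 1 / s x else 0) = 1"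
  using sampling_prob[of x] supp_subset expectation_component[of x "\<lambda>v. if v then 1 / s x else 0"]
  by auto

lemma estimation_error_covariance:
  assumes "x \<in> X" "y \<in> X"
  shows "measure_pmf.expectation P (\<lambda>B. estimation_error B x * estimation_error B y)
           = (if x = y \<and> x \<in> S then (1 - s x) / s x else 0)"
proof (cases "x \<in> S \<and> y \<in> S")
  case False
  then show ?thesis using assms estimation_error_outside_supp by auto
next
  case True
  let ?u = "\<lambda>x v. if v then 1 / s x else 0"
  have "s x > 0" using sampling_prob True supp_subset by blast
  show ?thesis
  proof (cases "x = y")
    case True
    have "measure_pmf.expectation P (\<lambda>B. estimation_error B x * estimation_error B x)
            = measure_pmf.expectation P (\<lambda>B. (?u x (B x) - 1)\<^sup>2)"
      using \<open>x \<in> S \<and> y \<in> S\<close> by (simp add: estimation_error_supp power2_eq_square)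
    also have "\<dots> = (?u x True - 1)\<^sup>2 * s x + (?u x False - 1)\<^sup>2 * (1 - s x)"
      using \<open>x \<in> S \<and> y \<in> S\<close> by (intro expectation_component) simp
    also have "\<dots> = (1 - s x) / s x"
      using \<open>s x > 0\<close> by (simp add: field_simps power2_eq_square)
    finally show ?thesis using True \<open>x \<in> S \<and> y \<in> S\<close> by simp
  next
    case False
    have "measure_pmf.expectation P (\<lambda>B. estimation_error B x * estimation_error B y)
            = measure_pmf.expectation P (\<lambda>B. ?u x (B x) * ?u y (B y) - ?u x (B x) - ?u y (B y) + 1)"
      using \<open>x \<in> S \<and> y \<in> S\<close> by (simp add: estimation_error_supp algebra_simps)
    also have "\<dots> = 0"
    proof -
      have "s y > 0" using sampling_prob True supp_subset by blast
      then show ?thesis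
        using \<open>x \<in> S \<and> y \<in> S\<close> False \<open>s x > 0\<close>
        by (simp add: expectation_component_pair[of x y "?u x" "?u y"] expectation_inverse_weight)
    qed
    finally show ?thesis using False by simp
  qed
qed

lemma expectation_abs_estimation_error:
  assumes "x \<in> X"
  shows "measure_pmf.expectation P (\<lambda>B. \<bar>estimation_error B x\<bar>) \<le> 2 * (1 - s x)"
proof (cases "x \<in> S")
  case True
  then have "0 < s x" "s x \<le> 1" using sampling_prob assms by auto
  have "measure_pmf.expectation P (\<lambda>B. \<bar>estimation_error B x\<bar>)
          = measure_pmf.expectation P (\<lambda>B. \<bar>(if B x then 1 / s x else 0) - 1\<bar>)"
    using True by (simp add: estimation_error_supp)
  also have "\<dots> = \<bar>1 / s x - 1\<bar> * s x + 1 * (1 - s x)"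
    using expectation_component[OF True, of "\<lambda>v. \<bar>(if v then 1 / s x else 0) - 1\<bar>"] by simp
  also have "\<dots> = 2 * (1 - s x)"
    using \<open>0 < s x\<close> \<open>s x \<le> 1\<close> by (simp add: field_simps)
  finally show ?thesis by simp
next
  case False
  then show ?thesis using sampling_prob assms estimation_error_outside_supp by auto
qed

lemma expectation_abs_sum_estimation_error:
  assumes "F \<subseteq> X"
  shows "measure_pmf.expectation P (\<lambda>B. \<bar>\<Sum>x\<in>F. estimation_error B x\<bar>) \<le> sqrt (\<Sum>x\<in>F. (1 - s x) / s x)"
proof -
  let ?Y = "\<lambda>B. \<bar>\<Sum>x\<in>F. estimation_error B x\<bar>"
  have fin: "finite F" using assms finite_X by (rule finite_subset)
  have "(measure_pmf.expectation P ?Y)\<^sup>2 \<le> measure_pmf.expectation P (\<lambda>B. (?Y B)\<^sup>2)"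
    using measure_pmf.variance_eq[of P ?Y] measure_pmf.variance_positive[of P ?Y] by simp
  also have "\<dots> = (\<Sum>x\<in>F. \<Sum>y\<in>F. measure_pmf.expectation P (\<lambda>B. estimation_error B x * estimation_error B y))"
    by (simp add: power2_eq_square sum_product Bochner_Integration.integral_sum)
  also have "\<dots> = (\<Sum>x\<in>F. \<Sum>y\<in>F. if x = y \<and> x \<in> S then (1 - s x) / s x else 0)"
    using assms by (intro sum.cong refl estimation_error_covariance) auto
  also have "\<dots> = (\<Sum>x\<in>F. if x \<in> S then (1 - s x) / s x else 0)"
    using fin by (intro sum.cong refl) (auto simp: if_distrib cong: if_cong)
  also have "\<dots> \<le> (\<Sum>x\<in>F. (1 - s x) / s x)"
    using assms sampling_prob by (intro sum_mono) (auto intro!: divide_nonneg_pos)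
  finally show ?thesis
    by (simp add: real_le_rsqrt Bochner_Integration.integral_nonneg)
qed

lemma expectation_discrepancy_estimation_error:
  "measure_pmf.expectation P (\<lambda>B. discrepancy X g (estimation_error B))
     \<le> sqrt (card (g ` X)) * sqrt (\<Sum>x\<in>X. (1 - s x) / s x)"
proof -
  define V where "V c = (\<Sum>x\<in>{x\<in>X. g x = c}. (1 - s x) / s x)" for c
  have "measure_pmf.expectation P (\<lambda>B. discrepancy X g (estimation_error B))
          \<le> (\<Sum>c\<in>g ` X. sqrt (V c))"
    unfolding discrepancy_def cell_sum_def V_def
    by (simp add: Bochner_Integration.integral_sum sum_mono expectation_abs_sum_estimation_error)
  also have "\<dots> \<le> sqrt (card (g ` X)) * sqrt (\<Sum>c\<in>g ` X. V c)"
  proof -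
    have "(\<Sum>c\<in>g ` X. 1 * sqrt (V c))\<^sup>2 \<le> (\<Sum>c\<in>g ` X. 1\<^sup>2) * (\<Sum>c\<in>g ` X. (sqrt (V c))\<^sup>2)"
      by (rule Cauchy_Schwarz_ineq_sum)
    also have "(\<Sum>c\<in>g ` X. (sqrt (V c))\<^sup>2) = (\<Sum>c\<in>g ` X. V c)"
      unfolding V_def using sampling_prob
      by (intro sum.cong refl real_sqrt_pow2 sum_nonneg) (auto intro!: divide_nonneg_pos)
    finally show ?thesis
      by (simp add: real_le_rsqrt flip: real_sqrt_mult)
  qed
  also have "(\<Sum>c\<in>g ` X. V c) = (\<Sum>x\<in>X. (1 - s x) / s x)"
    unfolding V_def by (rule sum.image_gen[OF finite_X, symmetric])
  finally show ?thesis .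
qed

lemma expectation_le_powr_of_pointwise:
  fixes F G :: "('a \<Rightarrow> bool) \<Rightarrow> real"
  assumes "\<And>B. F B \<le> G B powr r" "\<And>B. G B \<ge> 0" "measure_pmf.expectation P G \<le> K"
    and "0 < r" "r \<le> 1"
  shows "measure_pmf.expectation P F \<le> K powr r"
proof -
  have "measure_pmf.expectation P F \<le> measure_pmf.expectation P (\<lambda>B. G B powr r)"
    by (rule Bochner_Integration.integral_mono) (auto intro: assms(1))
  also have "\<dots> \<le> measure_pmf.expectation P G powr r"
    using assms by (intro measure_pmf.expectation_powr_le) auto
  also have "\<dots> \<le> K powr r"
    using assms by (intro powr_mono2) (auto simp: Bochner_Integration.integral_nonneg)
  finally show ?thesis .
qed

end

section \<open>Multiscale bounds\<close>

lemma cover_tree: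
  assumes fms: "finite_metric_space X d" and "X \<noteq> {}" and q: "q > 1"
  obtains g :: "nat \<Rightarrow> 'a \<Rightarrow> 'a"
  where "inj_on (g (Suc L)) X"
    and "\<And>k x y. k \<le> L \<Longrightarrow> g (Suc k) x = g (Suc k) y \<Longrightarrow> g k x = g k y"
    and "\<And>k x y. k \<le> L \<Longrightarrow> x \<in> X \<Longrightarrow> y \<in> X \<Longrightarrow> g k x = g k y \<Longrightarrow> d x y \<le> 2 * h_fun X d q L k"
    and "\<And>k. k \<le> L \<Longrightarrow> card (g k ` X) \<le> cover_number X d (q powr (- real k) * diam X d)"
proof -
  note M = finite_metric_spaceD[OF fms]
  define r where "r k = q powr (- real k) * diam X d" for k
  define Q where "Q k = (SOME Q. Q \<subseteq> X \<and> (\<forall>x\<in>X. \<exists>y\<in>Q. d x y \<le> r k) \<and> card Q = cover_number X d (r k))" for k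
  have Q: "Q k \<subseteq> X \<and> (\<forall>x\<in>X. \<exists>y\<in>Q k. d x y \<le> r k) \<and> card (Q k) = cover_number X d (r k)" for k
  proof -
    have "r k \<ge> 0"
      using diam_nonneg[OF fms \<open>X \<noteq> {}\<close>] unfolding r_def by (intro mult_nonneg_nonneg) auto
    then have "\<exists>Q. Q \<subseteq> X \<and> (\<forall>x\<in>X. \<exists>y\<in>Q. d x y \<le> r k) \<and> card Q = cover_number X d (r k)"
      using cover_number_attained[where d = d and r = "r k", OF M(1) M(2)] by blast
    then show ?thesis
      unfolding Q_def by (rule someI_ex)
  qed
  have Q_subset: "\<And>k. k \<le> L \<Longrightarrow> Q k \<subseteq> X"
    and Q_covers: "\<And>k x. k \<le> L \<Longrightarrow> x \<in> X \<Longrightarrow> \<exists>y\<in>Q k. d x y \<le> r k"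
    using Q by blast+
  show ?thesis
  proof (rule nested_nets[where Q = Q and r = r and X = X and d = d and L = L])
    fix g :: "nat \<Rightarrow> 'a \<Rightarrow> 'a"
    assume top: "\<And>x. g (Suc L) x = x"
      and nested: "\<And>k x y. k \<le> L \<Longrightarrow> g (Suc k) x = g (Suc k) y \<Longrightarrow> g k x = g k y"
      and image: "\<And>k. k \<le> L \<Longrightarrow> g k ` X \<subseteq> Q k"
      and bound: "\<And>k x. k \<le> Suc L \<Longrightarrow> x \<in> X \<Longrightarrow> g k x \<in> X \<and> d x (g k x) \<le> (\<Sum>j\<in>{k..L}. r j)"
    show ?thesis
    proof (rule that)
      show "inj_on (g (Suc L)) X" by (simp add: top inj_on_def)
      show "g k x = g k y" if "k \<le> L" "g (Suc k) x = g (Suc k) y" for k x y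
        using nested that .
      show "d x y \<le> 2 * h_fun X d q L k"
        if "k \<le> L" "x \<in> X" "y \<in> X" "g k x = g k y" for k x y
      proof -
        have gx: "g k x \<in> X" "d x (g k x) \<le> (\<Sum>j\<in>{k..L}. r j)"
          and gy: "g k y \<in> X" "d y (g k y) \<le> (\<Sum>j\<in>{k..L}. r j)"
          using bound[of k x] bound[of k y] that by auto
        have "d x y \<le> d x (g k x) + d y (g k y)"
          using M(4)[OF that(2) gx(1) that(3)] M(3)[OF gx(1) that(3)] that(4) by simp
        moreover have "(\<Sum>j\<in>{k..L}. r j) = h_fun X d q L k"
          using h_fun_eq_sum[OF q, of k L X d] that(1) by (simp add: r_def)
        ultimately show ?thesis
          using gx(2) gy(2) by linarith
      qed
      show "card (g k ` X) \<le> cover_number X d (q powr (- real k) * diam X d)" if "k \<le> L" for k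
      proof -
        have "card (g k ` X) \<le> card (Q k)"
          using image[OF that] Q[of k] M(1) by (intro card_mono) (auto intro: finite_subset)
        then show ?thesis using Q[of k] by (simp add: r_def)
      qed
    qed
  qed (fact Q_subset Q_covers M(2) M(4))+
qed

lemma discrepancy_identity: "discrepancy X (\<lambda>x. x) f = (\<Sum>x\<in>X. \<bar>f x\<bar>)"
proof -
  have "{y \<in> X. y = x} = {x}" if "x \<in> X" for x
    using that by auto
  then show ?thesis
    by (simp add: discrepancy_def cell_sum_def)
qed

lemma KR_le_total_variation:
  assumes "finite X" "\<And>x. x \<in> X \<Longrightarrow> a x \<ge> 0" "\<And>x. x \<in> X \<Longrightarrow> b x \<ge> 0"
    and "\<And>x. x \<in> X \<Longrightarrow> d x x = 0" "\<And>x y. x \<in> X \<Longrightarrow> y \<in> X \<Longrightarrow> 0 \<le> d x y" and "p > 0"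
  shows "KR X d p C a b \<le> (C powr p / 2 * (\<Sum>x\<in>X. \<bar>a x - b x\<bar>)) powr (1 / p)"
  by (rule KR_le_hierarchical[where g = "\<lambda>_ x. x" and L = 0 and H = "\<lambda>_. 0" and l = 1])
    (simp_all add: assms discrepancy_identity)

lemma sum_increments_le:
  fixes W T :: "nat \<Rightarrow> real"
  assumes "l \<le> L" "\<And>j. W j \<ge> 0" "\<And>j. T j \<ge> 0" "c \<le> W l + c'"
  shows "(\<Sum>j\<in>{l..L}. W j * (T (Suc j) - T j)) + c * T l \<le> (\<Sum>j\<in>{l..L}. W j * T (Suc j)) + c' * T l"
proof -
  have "W l * T l \<le> (\<Sum>j\<in>{l..L}. W j * T j)"
    using assms by (intro member_le_sum) auto
  moreover have "c * T l \<le> (W l + c') * T l"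
    using assms by (intro mult_right_mono) auto
  ultimately show ?thesis
    by (simp add: sum_subtractf right_diff_distrib algebra_simps)
qed

lemma A_fun_eq_Suc:
  assumes "l \<le> L"
  shows "A_fun X d q p L l = A_fun X d q p L (Suc l) + diam X d powr p * 2 powr (p - 1) *
           (q / (q - 1)) powr p * (q powr (p - real l * p) * sqrt (cover_number X d (q powr (- real l) * diam X d)))"
  using assms by (simp add: A_fun_def sum.atLeast_Suc_atMost[OF assms] algebra_simps)

lemma sum_level_weights_le_A_fun:
  fixes N :: "nat \<Rightarrow> nat"
  assumes q: "q > 1" and D: "diam X d \<ge> 0" and p: "p > 0" and "l \<le> L"
    and N_top: "N (Suc L) \<le> card X"
    and N_cover: "\<And>j. j \<le> L \<Longrightarrow> N j \<le> cover_number X d (q powr (- real j) * diam X d)"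
  shows "(\<Sum>j\<in>{l..L}. 2 powr (p - 1) * h_fun X d q L j powr p * sqrt (N (Suc j))) \<le> A_fun X d q p L (Suc l)"
proof -
  define f where "f j = 2 powr (p - 1) * h_fun X d q L j powr p * sqrt (N (Suc j))" for j
  define c where "c j = q powr (p - real j * p) * sqrt (cover_number X d (q powr (- real j) * diam X d))" for j
  define K where "K = diam X d powr p * 2 powr (p - 1) * (q / (q - 1)) powr p"
  have "f j \<le> K * c (Suc j)" if "j < L" for j
  proof -
    have "h_fun X d q L j powr p \<le> diam X d powr p * (q / (q - 1)) powr p * q powr (p - real (Suc j) * p)"
      using h_fun_powr_le[OF q D _ p, of j L] that by simp
    moreover have "sqrt (N (Suc j)) \<le> sqrt (cover_number X d (q powr (- real (Suc j)) * diam X d))"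
      using N_cover[of "Suc j"] that by simp
    ultimately have "f j \<le> 2 powr (p - 1) * (diam X d powr p * (q / (q - 1)) powr p * q powr (p - real (Suc j) * p))
                        * sqrt (cover_number X d (q powr (- real (Suc j)) * diam X d))"
      unfolding f_def by (intro mult_mono) auto
    then show ?thesis
      unfolding K_def c_def by (simp add: mult_ac)
  qed
  then have "(\<Sum>j\<in>{l..<L}. f j) \<le> (\<Sum>j\<in>{l..<L}. K * c (Suc j))"
    by (intro sum_mono) simp
  also have "\<dots> = K * (\<Sum>j\<in>{Suc l..L}. c j)"
  proof -
    have "(\<Sum>j\<in>{Suc l..L}. c j) = (\<Sum>j\<in>{l..<L}. c (Suc j))"
      by (metis atLeastLessThanSuc_atLeastAtMost sum.shift_bounds_Suc_ivl)
    then show ?thesis by (simp add: sum_distrib_left)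
  qed
  finally have "(\<Sum>j\<in>{l..<L}. f j) \<le> K * (\<Sum>j\<in>{Suc l..L}. c j)" .
  moreover have "f L \<le> diam X d powr p * 2 powr (p - 1) * (q powr (- real L * p) * sqrt (card X))"
  proof -
    have "h_fun X d q L L powr p = q powr (- real L * p) * diam X d powr p"
      using h_fun_Suc[OF q, of X d L L] q D by (simp add: h_fun_top powr_mult powr_powr)
    moreover have "2 powr (p - 1) * (q powr (- real L * p) * diam X d powr p) * sqrt (N (Suc L))
                     \<le> 2 powr (p - 1) * (q powr (- real L * p) * diam X d powr p) * sqrt (card X)"
      using N_top by (intro mult_left_mono) auto
    ultimately show ?thesis
      unfolding f_def by (simp add: mult_ac)
  qed
  moreover have "(\<Sum>j\<in>{l..L}. f j) = (\<Sum>j\<in>{l..<L}. f j) + f L"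
    using \<open>l \<le> L\<close> by (simp add: atLeastLessThanSuc_atLeastAtMost[symmetric] sum.atLeastLessThan_Suc)
  moreover have "A_fun X d q p L (Suc l)
      = diam X d powr p * 2 powr (p - 1) * (q powr (- real L * p) * sqrt (card X)) + K * (\<Sum>j\<in>{Suc l..L}. c j)"
    unfolding A_fun_def K_def c_def by (simp only: distrib_left mult.assoc sum_distrib_left)
  ultimately show ?thesis
    unfolding f_def by linarith
qed

lemma threshold_level:
  assumes q: "q > 1" and D: "diam X d \<ge> 0"
    and "2 * h_fun X d q L L \<le> C" "C < 2 * h_fun X d q L 0"
  obtains l where "l \<in> {1..L}" "2 * h_fun X d q L l \<le> C" "C < 2 * h_fun X d q L (l - 1)"
    and "(THE l. l \<in> {1..L} \<and> 2 * h_fun X d q L l \<le> C \<and> C < 2 * h_fun X d q L (l - 1)) = l"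
proof -
  define l where "l = (LEAST k. 2 * h_fun X d q L k \<le> C)"
  have l_le: "2 * h_fun X d q L l \<le> C"
    unfolding l_def by (rule LeastI[of _ L]) (rule assms(3))
  have "l \<le> L"
    unfolding l_def by (rule Least_le) (rule assms(3))
  have "l \<ge> 1"
    using l_le assms(4) by (cases l) auto
  have l_gt: "C < 2 * h_fun X d q L (l - 1)"
    using not_less_Least[of "l - 1" "\<lambda>k. 2 * h_fun X d q L k \<le> C"] \<open>l \<ge> 1\<close>
    unfolding l_def by linarith
  have unique: "l' = l" if "l' \<in> {1..L}" "2 * h_fun X d q L l' \<le> C" "C < 2 * h_fun X d q L (l' - 1)" for l'
  proof (rule antisym)
    show "l \<le> l'" unfolding l_def by (rule Least_le) (rule that(2))
    show "l' \<le> l"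
    proof (rule ccontr)
      assume "\<not> l' \<le> l"
      then have "h_fun X d q L (l' - 1) \<le> h_fun X d q L l"
        by (intro h_fun_antimono[OF q D]) simp
      then show False using that(3) l_le by simp
    qed
  qed
  show ?thesis
  proof (rule that)
    show "l \<in> {1..L}" using \<open>l \<ge> 1\<close> \<open>l \<le> L\<close> by simp
    show "(THE l. l \<in> {1..L} \<and> 2 * h_fun X d q L l \<le> C \<and> C < 2 * h_fun X d q L (l - 1)) = l"
      by (rule the_equality) (use \<open>l \<in> {1..L}\<close> l_le l_gt unique in blast)+
  qed (fact l_le l_gt)+
qed

context bernoulli_model
begin

lemma estimator_nonneg: "x \<in> X \<Longrightarrow> bernoulli_estimator X \<mu> s B x \<ge> 0"
  using sampling_prob[of x] by (simp add: bernoulli_estimator_def)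

lemma weights_nonneg: "x \<in> X \<Longrightarrow> \<mu> x \<ge> 0"
  using weights_01[of x] by auto

lemma estimation_error_eq: "estimation_error B = (\<lambda>x. bernoulli_estimator X \<mu> s B x - \<mu> x)"
  by (simp add: estimation_error_def fun_eq_iff)

lemma expected_KR_le_total_variation:
  assumes "\<And>x. x \<in> X \<Longrightarrow> d x x = 0" "\<And>x y. x \<in> X \<Longrightarrow> y \<in> X \<Longrightarrow> 0 \<le> d x y" "p \<ge> 1"
  shows "measure_pmf.expectation P (\<lambda>B. KR X d p C (bernoulli_estimator X \<mu> s B) \<mu>)
           \<le> (C powr p / 2) powr (1 / p) * (2 * (\<Sum>x\<in>X. 1 - s x)) powr (1 / p)"
proof -
  define G where "G B = C powr p / 2 * (\<Sum>x\<in>X. \<bar>estimation_error B x\<bar>)" for B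
  have "KR X d p C (bernoulli_estimator X \<mu> s B) \<mu> \<le> G B powr (1 / p)" for B
    unfolding G_def estimation_error_def
    by (rule KR_le_total_variation) (use assms finite_X estimator_nonneg weights_nonneg in auto)
  moreover have "measure_pmf.expectation P G \<le> C powr p / 2 * (2 * (\<Sum>x\<in>X. 1 - s x))"
  proof -
    have "measure_pmf.expectation P G = C powr p / 2 * (\<Sum>x\<in>X. measure_pmf.expectation P (\<lambda>B. \<bar>estimation_error B x\<bar>))"
      unfolding G_def by (simp add: Bochner_Integration.integral_sum)
    also have "\<dots> \<le> C powr p / 2 * (\<Sum>x\<in>X. 2 * (1 - s x))"
      by (intro mult_left_mono sum_mono expectation_abs_estimation_error) auto
    finally show ?thesis by (simp add: sum_distrib_left)
  qed
  ultimately have "measure_pmf.expectation P (\<lambda>B. KR X d p C (bernoulli_estimator X \<mu> s B) \<mu>)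
                     \<le> (C powr p / 2 * (2 * (\<Sum>x\<in>X. 1 - s x))) powr (1 / p)"
    using \<open>p \<ge> 1\<close> by (intro expectation_le_powr_of_pointwise) (auto simp: G_def)
  also have "\<dots> = (C powr p / 2) powr (1 / p) * (2 * (\<Sum>x\<in>X. 1 - s x)) powr (1 / p)"
    by (rule powr_mult)
  finally show ?thesis .
qed

lemma expectation_weighted_discrepancies:
  fixes g :: "nat \<Rightarrow> 'a \<Rightarrow> 'b" and W :: "nat \<Rightarrow> real"
  assumes "\<And>j. W j \<ge> 0" "c \<ge> 0"
  shows "measure_pmf.expectation P (\<lambda>B. (\<Sum>j\<in>{l..L}. W j * discrepancy X (g (Suc j)) (estimation_error B))
                                         + c * discrepancy X (g l) (estimation_error B))
           \<le> ((\<Sum>j\<in>{l..L}. W j * sqrt (card (g (Suc j) ` X))) + c * sqrt (card (g l ` X)))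
               * sqrt (\<Sum>x\<in>X. (1 - s x) / s x)"
proof -
  let ?V = "sqrt (\<Sum>x\<in>X. (1 - s x) / s x)"
  let ?E = "\<lambda>j. measure_pmf.expectation P (\<lambda>B. discrepancy X (g j) (estimation_error B))"
  have "measure_pmf.expectation P (\<lambda>B. (\<Sum>j\<in>{l..L}. W j * discrepancy X (g (Suc j)) (estimation_error B))
                                         + c * discrepancy X (g l) (estimation_error B))
          = (\<Sum>j\<in>{l..L}. W j * ?E (Suc j)) + c * ?E l"
    by (simp add: Bochner_Integration.integral_sum)
  also have "\<dots> \<le> (\<Sum>j\<in>{l..L}. W j * (sqrt (card (g (Suc j) ` X)) * ?V)) + c * (sqrt (card (g l ` X)) * ?V)"
    using assms expectation_discrepancy_estimation_error
    by (intro add_mono sum_mono mult_left_mono) auto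
  also have "\<dots> = ((\<Sum>j\<in>{l..L}. W j * sqrt (card (g (Suc j) ` X))) + c * sqrt (card (g l ` X))) * ?V"
    by (simp add: sum_distrib_right distrib_right mult.assoc)
  finally show ?thesis .
qed


lemma expected_KR_le_multiscale:
  assumes fms: "finite_metric_space X d" and "X \<noteq> {}" and p: "p \<ge> 1" and q: "q > 1"
    and "l \<le> L" and "c \<ge> 0"
    and C_le: "C powr p / 2 \<le> 2 powr (p - 1) * h_fun X d q L l powr p + c"
    and K: "A_fun X d q p L (Suc l) + c * sqrt (cover_number X d (q powr (- real l) * diam X d)) \<le> K"
  shows "measure_pmf.expectation P (\<lambda>B. KR X d p C (bernoulli_estimator X \<mu> s B) \<mu>)
           \<le> K powr (1 / p) * (\<Sum>x\<in>X. (1 - s x) / s x) powr (1 / (2 * p))"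
proof -
  note M = finite_metric_spaceD[OF fms]
  have D: "diam X d \<ge> 0" using diam_nonneg[OF fms \<open>X \<noteq> {}\<close>] .
  obtain g :: "nat \<Rightarrow> 'a \<Rightarrow> 'a"
    where finest: "inj_on (g (Suc L)) X"
      and nested: "\<And>k x y. k \<le> L \<Longrightarrow> g (Suc k) x = g (Suc k) y \<Longrightarrow> g k x = g k y"
      and cell_diam: "\<And>k x y. k \<le> L \<Longrightarrow> x \<in> X \<Longrightarrow> y \<in> X \<Longrightarrow> g k x = g k y \<Longrightarrow> d x y \<le> 2 * h_fun X d q L k"
      and cells: "\<And>k. k \<le> L \<Longrightarrow> card (g k ` X) \<le> cover_number X d (q powr (- real k) * diam X d)"
    by (rule cover_tree[OF fms \<open>X \<noteq> {}\<close> q]) (rule that)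
  define W where "W j = 2 powr (p - 1) * h_fun X d q L j powr p" for j
  define T where "T j B = discrepancy X (g j) (estimation_error B)" for j B
  define V where "V = (\<Sum>x\<in>X. (1 - s x) / s x)"
  define G where "G B = (\<Sum>j\<in>{l..L}. W j * T (Suc j) B) + c * T l B" for B
  have W_nonneg: "W j \<ge> 0" for j by (simp add: W_def)
  have T_nonneg: "T j B \<ge> 0" for j B by (simp add: T_def discrepancy_def sum_nonneg)
  have V_nonneg: "V \<ge> 0"
    unfolding V_def using sampling_prob by (auto intro!: sum_nonneg divide_nonneg_pos)
  have "p > 0" "l \<le> Suc L" using p \<open>l \<le> L\<close> by auto
  have h_nonneg: "h_fun X d q L k \<ge> 0" if "k \<le> L" for k
    using h_fun_nonneg[OF q D] that by simp
  have "KR X d p C (bernoulli_estimator X \<mu> s B) \<mu> \<le> G B powr (1 / p)" for B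
  proof (rule KR_le_hierarchical[where g = g and H = "h_fun X d q L" and L = L and l = l])
    show "(\<Sum>j\<in>{l..L}. 2 powr (p - 1) * h_fun X d q L j powr p *
            (discrepancy X (g (Suc j)) (\<lambda>x. bernoulli_estimator X \<mu> s B x - \<mu> x)
             - discrepancy X (g j) (\<lambda>x. bernoulli_estimator X \<mu> s B x - \<mu> x)))
          + C powr p / 2 * discrepancy X (g l) (\<lambda>x. bernoulli_estimator X \<mu> s B x - \<mu> x) \<le> G B"
      using sum_increments_le[where W = W and T = "\<lambda>j. T j B" and c = "C powr p / 2" and c' = c] T_nonneg W_nonneg C_le \<open>l \<le> L\<close>
      by (simp add: G_def W_def T_def estimation_error_eq)
  qed (fact M(1) estimator_nonneg weights_nonneg M(2) M(5) \<open>p > 0\<close> finest nested cell_diam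
         h_nonneg \<open>l \<le> Suc L\<close>)+
  moreover have "measure_pmf.expectation P G \<le> K * sqrt V"
  proof -
    have "measure_pmf.expectation P G
            \<le> ((\<Sum>j\<in>{l..L}. W j * sqrt (card (g (Suc j) ` X))) + c * sqrt (card (g l ` X))) * sqrt V"
      unfolding G_def T_def V_def using W_nonneg \<open>c \<ge> 0\<close> by (rule expectation_weighted_discrepancies)
    also have "\<dots> \<le> K * sqrt V"
    proof (intro mult_right_mono)
      have "card (g (Suc L) ` X) \<le> card X" using M(1) by (rule card_image_le)
      then have "(\<Sum>j\<in>{l..L}. W j * sqrt (card (g (Suc j) ` X))) \<le> A_fun X d q p L (Suc l)"
        unfolding W_def using cells \<open>p > 0\<close> \<open>l \<le> L\<close>
        by (intro sum_level_weights_le_A_fun[where N = "\<lambda>j. card (g j ` X)", OF q D]) auto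
      moreover have "c * sqrt (card (g l ` X)) \<le> c * sqrt (cover_number X d (q powr (- real l) * diam X d))"
        using cells[OF \<open>l \<le> L\<close>] \<open>c \<ge> 0\<close> by (intro mult_left_mono) auto
      ultimately show "(\<Sum>j\<in>{l..L}. W j * sqrt (card (g (Suc j) ` X))) + c * sqrt (card (g l ` X)) \<le> K"
        using K by linarith
    qed (simp add: V_nonneg)
    finally show ?thesis .
  qed
  ultimately have "measure_pmf.expectation P (\<lambda>B. KR X d p C (bernoulli_estimator X \<mu> s B) \<mu>)
                     \<le> (K * sqrt V) powr (1 / p)"
    using p G_def W_nonneg T_nonneg \<open>c \<ge> 0\<close>
    by (intro expectation_le_powr_of_pointwise) (auto intro!: add_nonneg_nonneg sum_nonneg)
  also have "\<dots> = K powr (1 / p) * V powr (1 / (2 * p))"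
    using V_nonneg by (simp add: powr_mult powr_half_sqrt[symmetric] powr_powr)
  finally show ?thesis
    by (simp add: V_def)
qed

end

lemma cover_number_diam_le_1:
  assumes "finite X" "X \<noteq> {}"
  shows "cover_number X d (diam X d) \<le> 1"
proof -
  obtain x0 where "x0 \<in> X" using assms(2) by blast
  then have "cover_number X d (diam X d) \<le> card {x0}"
    using assms(1) dist_le_diam[OF assms(1)] by (intro cover_number_le) auto
  then show ?thesis by simp
qed

lemma scale_choice:
  assumes fms: "finite_metric_space X d" and "X \<noteq> {}" and p: "p \<ge> 1" and q: "q > 1" and "C > 0"
    and coarse: "\<not> C \<le> max (2 * h_fun X d q L L) (min_sep X d)"
  obtains l c where "l \<le> L" "c \<ge> 0" "C powr p / 2 \<le> 2 powr (p - 1) * h_fun X d q L l powr p + c"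
    and "A_fun X d q p L (Suc l) + c * sqrt (cover_number X d (q powr (- real l) * diam X d))
           \<le> E_const X d p C q L"
proof -
  let ?W = "\<lambda>l. 2 powr (p - 1) * h_fun X d q L l powr p"
  have D: "diam X d \<ge> 0" by (rule diam_nonneg[OF fms \<open>X \<noteq> {}\<close>])
  have "p > 0" using p by simp
  have hL: "2 * h_fun X d q L L \<le> C" using coarse by simp
  have W_double: "(2 * h_fun X d q L l) powr p = 2 * ?W l" for l
    by (simp add: powr_mult powr_diff)
  show ?thesis
  proof (cases "2 * h_fun X d q L 0 \<le> C")
    case True
    have "(2 * h_fun X d q L 0) powr p \<le> C powr p"
      using True h_fun_nonneg[OF q D, of 0 L] p by (intro powr_mono2) auto
    then have c: "C powr p / 2 - ?W 0 \<ge> 0" using W_double[of 0] by simp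
    have "sqrt (cover_number X d (q powr (- real 0) * diam X d)) \<le> 1"
      using cover_number_diam_le_1[OF finite_metric_spaceD(1)[OF fms] \<open>X \<noteq> {}\<close>, of d] q by simp
    then have "(C powr p / 2 - ?W 0) * sqrt (cover_number X d (q powr (- real 0) * diam X d))
                 \<le> C powr p / 2 - ?W 0"
      using c by (rule mult_left_le)
    moreover have "E_const X d p C q L = (C powr p / 2 - ?W 0) + A_fun X d q p L 1"
      using coarse True by (simp add: E_const_def)
    ultimately show ?thesis
      using c by (intro that[of 0 "C powr p / 2 - ?W 0"]) simp_all
  next
    case False
    then have "C < 2 * h_fun X d q L 0" by simp
    then obtain l where l: "l \<in> {1..L}" "2 * h_fun X d q L l \<le> C" "C < 2 * h_fun X d q L (l - 1)"
      and THE: "(THE l. l \<in> {1..L} \<and> 2 * h_fun X d q L l \<le> C \<and> C < 2 * h_fun X d q L (l - 1)) = l"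
      by (rule threshold_level[OF q D hL]) (rule that)
    have h_bound: "h_fun X d q L (l - 1) powr p \<le> diam X d powr p * (q / (q - 1)) powr p * q powr (p - real l * p)"
      using h_fun_powr_le[OF q D _ \<open>p > 0\<close>, of "l - 1" L] l by auto
    have "C powr p \<le> (2 * h_fun X d q L (l - 1)) powr p"
      using l \<open>C > 0\<close> p by (intro powr_mono2) auto
    also have "\<dots> = 2 * (2 powr (p - 1) * h_fun X d q L (l - 1) powr p)"
      by (rule W_double)
    also have "\<dots> \<le> 2 * (2 powr (p - 1) * (diam X d powr p * (q / (q - 1)) powr p * q powr (p - real l * p)))"
      using h_bound by (intro mult_left_mono) auto
    finally have C_bound: "C powr p / 2 \<le> 2 powr (p - 1) * (diam X d powr p * (q / (q - 1)) powr p * q powr (p - real l * p))"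
      by simp
    have "C powr p / 2 * sqrt (cover_number X d (q powr (- real l) * diam X d))
        \<le> diam X d powr p * 2 powr (p - 1) * (q / (q - 1)) powr p *
          (q powr (p - real l * p) * sqrt (cover_number X d (q powr (- real l) * diam X d)))"
      using mult_right_mono[OF C_bound, of "sqrt (cover_number X d (q powr (- real l) * diam X d))"]
      by (simp add: mult_ac)
    moreover have "E_const X d p C q L = A_fun X d q p L l"
      using coarse False THE by (simp add: E_const_def)
    ultimately show ?thesis
      using A_fun_eq_Suc[of l L X d q p] l
      by (intro that[of l "C powr p / 2"]) auto
  qed
qed

theorem theoremB2:
  fixes X :: "'a set" and d :: "'a \<Rightarrow> 'a \<Rightarrow> real"
    and \<mu> s :: "'a \<Rightarrow> real" and p C q :: real and L :: nat
  assumes "finite_metric_space X d"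
    and "card X \<ge> 2"
    and "\<forall>x\<in>X. \<mu> x \<in> {0, 1}"
    and "\<forall>x\<in>X. 0 < s x \<and> s x \<le> 1"
    and "p \<ge> 1" and "C > 0" and "q > 1"
  shows "measure_pmf.expectation (bernoulli_family X \<mu> s)
           (\<lambda>B. KR X d p C (bernoulli_estimator X \<mu> s B) \<mu>)
         \<le> E_const X d p C q L powr (1 / p) *
           (if C \<le> max (2 * h_fun X d q L L) (min_sep X d)
            then (2 * (\<Sum>x\<in>X. 1 - s x)) powr (1 / p)
            else (\<Sum>x\<in>X. (1 - s x) / s x) powr (1 / (2 * p)))"
proof -
  note M = finite_metric_spaceD[OF assms(1)]
  interpret bernoulli_model X \<mu> s
    using M(1) assms(3,4) by unfold_locales auto
  have "X \<noteq> {}" using assms(2) by auto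
  show ?thesis
  proof (cases "C \<le> max (2 * h_fun X d q L L) (min_sep X d)")
    case True
    then show ?thesis
      using expected_KR_le_total_variation[where d = d and p = p and C = C, OF M(2) M(5) assms(5)] by (simp add: E_const_def)
  next
    case False
    obtain l c where "l \<le> L" "c \<ge> 0" "C powr p / 2 \<le> 2 powr (p - 1) * h_fun X d q L l powr p + c"
      and "A_fun X d q p L (Suc l) + c * sqrt (cover_number X d (q powr (- real l) * diam X d))
             \<le> E_const X d p C q L"
      by (rule scale_choice[OF assms(1) \<open>X \<noteq> {}\<close> assms(5,7,6) False]) (rule that)
    then show ?thesis
      using expected_KR_le_multiscale[OF assms(1) \<open>X \<noteq> {}\<close> assms(5,7)] False by simp
  qed
qed

end
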